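(* Let $\alpha\in[0,1)$, let $q_\alpha\in\mathcal{P}\big((1+\alpha)/2\big)$, and let $g:[0,1)\to\mathbb{R}$ be continuously differentiable with $g(0)=0$ and $g'(0)\neq0$. Then for every $\epsilon>0$ there exists $\delta>0$ such that for every $r\in(1-\delta,1)$, $$r\int_0^r (g'(x))^2\,dx \;\ge\; r\int_0^r q_\alpha(x)\,g^2(x)\,dx+\left(\frac{1+\alpha}{2}-\epsilon\right)g^2(r).$$
   Context: For $\gamma\ge 0$, $\mathcal{P}(\gamma)$ is the class of continuous functions $q:[0,1)\to\mathbb{R}$ such that (a) $q(r)\ge0$ for all $r\in[0,1)$, and (b) the solution $y$ of $y''+qy=0$, $y(0)=0$, $y'(0)=1$, is positive on $(0,1)$ and satisfies $\lim_{x\to1^-} \frac{y'(x)}{y(x)}\ge\gamma$. *)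

theory Defs
  imports "HOL-Analysis.Analysis" "HOL-Library.Extended_Real"
begin

definition ivp_solution :: "(real \<Rightarrow> real) \<Rightarrow> (real \<Rightarrow> real) \<Rightarrow> (real \<Rightarrow> real) \<Rightarrow> bool" where
  "ivp_solution q y yd \<longleftrightarrow>
     (\<forall>x\<in>{0..<1}. (y has_real_derivative yd x) (at x within {0..<1})) \<and>
     (\<forall>x\<in>{0..<1}. (yd has_real_derivative (- q x * y x)) (at x within {0..<1})) \<and>
     y 0 = 0 \<and> yd 0 = 1"

text \<open>The class P(gamma). The limit of y'/y at 1 from the left is taken in the
extended reals (it may be infinite) and must be at least gamma.\<close>
definition classP :: "real \<Rightarrow> (real \<Rightarrow> real) \<Rightarrow> bool" where
  "classP \<gamma> q \<longleftrightarrow>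
     continuous_on {0..<1} q \<and> (\<forall>r\<in>{0..<1}. q r \<ge> 0) \<and>
     (\<exists>y yd. ivp_solution q y yd \<and> (\<forall>x\<in>{0<..<1}. y x > 0) \<and>
        (\<exists>L::ereal. ((\<lambda>x. ereal (yd x / y x)) \<longlongrightarrow> L) (at_left 1) \<and> L \<ge> ereal \<gamma>))"

end

theory Submission
  imports Defs
begin

text \<open>Picone's identity: for a positive solution \<open>y\<close> of \<open>y'' + q y = 0\<close>,
  \<open>(g\<^sup>2 y'/y)' = g'\<^sup>2 - q g\<^sup>2 - (g' - g y'/y)\<^sup>2 \<le> g'\<^sup>2 - q g\<^sup>2\<close>.
  Integrating over \<open>[0, r]\<close>, the boundary term at \<open>0\<close> vanishes because \<open>g\<close> and \<open>y\<close>
  both vanish to first order there, so \<open>g(r)\<^sup>2 y'(r)/y(r) \<le> \<integral>\<^sub>0\<^sup>r (g'\<^sup>2 - q g\<^sup>2)\<close>.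
  Near \<open>1\<close> the membership \<open>q \<in> P(\<gamma>)\<close> gives \<open>y'(r)/y(r) > \<gamma> - \<epsilon>/2\<close>, hence
  \<open>r y'(r)/y(r) > \<gamma> - \<epsilon>\<close>, and multiplying the inequality by \<open>r\<close> gives the claim.\<close>

lemma picone_identity_derivative:
  fixes y yd q g g' :: "real \<Rightarrow> real"
  assumes "(y has_real_derivative yd x) (at x within S)"
    and "(yd has_real_derivative - q x * y x) (at x within S)"
    and "(g has_real_derivative g' x) (at x within S)"
    and "y x \<noteq> 0"
  shows "((\<lambda>t. (g t)\<^sup>2 * yd t / y t) has_real_derivative
           (g' x)\<^sup>2 - q x * (g x)\<^sup>2 - (g' x - g x * yd x / y x)\<^sup>2) (at x within S)"
  by (rule DERIV_cong[OF DERIV_divide[OF DERIV_mult[OF DERIV_power[OF assms(3), of 2] assms(2)]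
        assms(1)]])
    (use assms(4) in \<open>simp_all add: field_simps power2_eq_square\<close>)

lemma tendsto_sq_mult_quotient_at_right_0:
  fixes y yd g :: "real \<Rightarrow> real"
  assumes "(g has_real_derivative a) (at_right 0)" "g 0 = 0"
    and "(y has_real_derivative b) (at_right 0)" "y 0 = 0" "b \<noteq> 0"
    and "(yd \<longlongrightarrow> c) (at_right 0)"
  shows "((\<lambda>s. (g s)\<^sup>2 * yd s / y s) \<longlongrightarrow> 0) (at_right 0)"
proof -
  have g_quot: "((\<lambda>s. g s / s) \<longlongrightarrow> a) (at_right 0)"
    using assms(1,2) by (simp add: has_field_derivative_iff)
  have y_quot: "((\<lambda>s. y s / s) \<longlongrightarrow> b) (at_right 0)"
    using assms(3,4) by (simp add: has_field_derivative_iff)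
  have "((\<lambda>s. (g s / s)\<^sup>2 * yd s * s / (y s / s)) \<longlongrightarrow> a\<^sup>2 * c * 0 / b) (at_right 0)"
    by (intro tendsto_intros g_quot y_quot assms(5,6))
  then have "((\<lambda>s. (g s / s)\<^sup>2 * yd s * s / (y s / s)) \<longlongrightarrow> 0) (at_right 0)"
    by simp
  moreover have "\<forall>\<^sub>F s in at_right 0. (g s / s)\<^sup>2 * yd s * s / (y s / s) = (g s)\<^sup>2 * yd s / y s"
    using eventually_at_right_less[of "0::real"]
    by eventually_elim (simp add: field_simps power2_eq_square)
  ultimately show ?thesis
    by (rule Lim_transform_eventually)
qed

lemma picone_inequality_Icc:
  fixes y yd q g g' :: "real \<Rightarrow> real"
  assumes "s \<le> r"
    and y_deriv: "\<forall>x\<in>{s..r}. (y has_real_derivative yd x) (at x within {s..r})"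
    and yd_deriv: "\<forall>x\<in>{s..r}. (yd has_real_derivative - q x * y x) (at x within {s..r})"
    and g_deriv: "\<forall>x\<in>{s..r}. (g has_real_derivative g' x) (at x within {s..r})"
    and y_pos: "\<forall>x\<in>{s..r}. y x > 0"
    and int: "(\<lambda>x. (g' x)\<^sup>2 - q x * (g x)\<^sup>2) integrable_on {s..r}"
  shows "(g r)\<^sup>2 * yd r / y r - (g s)\<^sup>2 * yd s / y s
           \<le> integral {s..r} (\<lambda>x. (g' x)\<^sup>2 - q x * (g x)\<^sup>2)"
proof -
  let ?D = "\<lambda>x. (g' x)\<^sup>2 - q x * (g x)\<^sup>2 - (g' x - g x * yd x / y x)\<^sup>2"
  have "((\<lambda>t. (g t)\<^sup>2 * yd t / y t) has_real_derivative ?D x) (at x within {s..r})"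
    if "x \<in> {s..r}" for x
    using that y_deriv yd_deriv g_deriv y_pos[rule_format, OF that]
    by (intro picone_identity_derivative) auto
  then have "(?D has_integral (g r)\<^sup>2 * yd r / y r - (g s)\<^sup>2 * yd s / y s) {s..r}"
    using \<open>s \<le> r\<close> by (intro fundamental_theorem_of_calculus)
      (auto simp: has_real_derivative_iff_has_vector_derivative)
  then show ?thesis
    by (rule has_integral_le[OF _ integrable_integral[OF int]]) simp
qed

lemma energy_terms_integrable:
  fixes q g g' :: "real \<Rightarrow> real"
  assumes q_cont: "continuous_on {0..<1} q"
    and g_deriv: "\<forall>x\<in>{0..<1}. (g has_real_derivative g' x) (at x within {0..<1})"
    and g'_cont: "continuous_on {0..<1} g'"
    and "r < 1"
  shows "(\<lambda>x. (g' x)\<^sup>2) integrable_on {0..r}"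
    and "(\<lambda>x. q x * (g x)\<^sup>2) integrable_on {0..r}"
proof -
  have sub: "{0..r} \<subseteq> {0..<1}"
    using \<open>r < 1\<close> by auto
  have "continuous_on {0..<1} g"
    using g_deriv by (meson DERIV_continuous continuous_on_eq_continuous_within)
  then show "(\<lambda>x. (g' x)\<^sup>2) integrable_on {0..r}" "(\<lambda>x. q x * (g x)\<^sup>2) integrable_on {0..r}"
    using sub by (auto intro!: integrable_continuous_real continuous_intros
        intro: continuous_on_subset[OF q_cont] continuous_on_subset[OF g'_cont]
        continuous_on_subset)
qed

lemma picone_inequality:
  fixes y yd q g g' :: "real \<Rightarrow> real"
  assumes ivp: "ivp_solution q y yd" and y_pos: "\<forall>x\<in>{0<..<1}. y x > 0"
    and q_cont: "continuous_on {0..<1} q"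
    and g_deriv: "\<forall>x\<in>{0..<1}. (g has_real_derivative g' x) (at x within {0..<1})"
    and g'_cont: "continuous_on {0..<1} g'" and "g 0 = 0"
    and r: "0 < r" "r < 1"
  shows "(g r)\<^sup>2 * yd r / y r \<le> integral {0..r} (\<lambda>x. (g' x)\<^sup>2 - q x * (g x)\<^sup>2)"
proof -
  define f where "f x = (g' x)\<^sup>2 - q x * (g x)\<^sup>2" for x
  define G where "G x = (g x)\<^sup>2 * yd x / y x" for x
  have y_deriv: "(y has_real_derivative yd x) (at x within T)"
    and yd_deriv: "(yd has_real_derivative - q x * y x) (at x within T)"
    and g_deriv_T: "(g has_real_derivative g' x) (at x within T)"
    if "x \<in> T" "T \<subseteq> {0..<1}" for x T
    using ivp g_deriv that unfolding ivp_solution_def by (meson DERIV_subset subsetD)+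
  have f_int: "f integrable_on {0..r}"
    unfolding f_def using energy_terms_integrable[OF q_cont g_deriv g'_cont \<open>r < 1\<close>]
    by (rule integrable_diff)
  have G_le: "G r - G s \<le> integral {0..r} f - integral {0..s} f" if s: "0 < s" "s < r" for s
  proof -
    have "G r - G s \<le> integral {s..r} f"
      unfolding G_def f_def using s r y_pos
      by (intro picone_inequality_Icc y_deriv yd_deriv g_deriv_T ballI
          integrable_on_subinterval[OF f_int[unfolded f_def]]) auto
    also have "integral {s..r} f = integral {0..r} f - integral {0..s} f"
      using Henstock_Kurzweil_Integration.integral_combine[OF _ _ f_int, of s] s by simp
    finally show ?thesis .
  qed
  have sub: "{0..r} \<subseteq> {0..<1}"
    using r by auto
  have at_0: "at 0 within {0..r} = at_right 0"
    using r(1) by (rule at_within_Icc_at_right)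
  have "continuous_on {0..r} (\<lambda>s. integral {0..s} f)"
    by (rule indefinite_integral_continuous_1[OF f_int])
  then have "((\<lambda>s. integral {0..s} f) \<longlongrightarrow> integral {0..0} f) (at 0 within {0..r})"
    using r unfolding continuous_on_def by (meson atLeastAtMost_iff less_eq_real_def order_refl)
  then have "((\<lambda>s. integral {0..s} f) \<longlongrightarrow> 0) (at_right 0)"
    by (simp add: at_0)
  moreover have "(G \<longlongrightarrow> 0) (at_right 0)"
    unfolding G_def
  proof (rule tendsto_sq_mult_quotient_at_right_0)
    show "(g has_real_derivative g' 0) (at_right 0)" "(y has_real_derivative 1) (at_right 0)"
      using g_deriv_T[OF _ sub, of 0] y_deriv[OF _ sub, of 0] ivp r at_0
      by (auto simp: ivp_solution_def)
    have "continuous (at 0 within {0..r}) yd"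
      using yd_deriv[OF _ sub, of 0] r DERIV_continuous by auto
    then show "(yd \<longlongrightarrow> 1) (at_right 0)"
      using ivp at_0 by (simp add: continuous_within ivp_solution_def)
  qed (use ivp \<open>g 0 = 0\<close> in \<open>auto simp: ivp_solution_def\<close>)
  moreover have "\<forall>\<^sub>F s in at_right 0. G r - G s \<le> integral {0..r} f - integral {0..s} f"
    using eventually_at_right[of 0 r] r G_le by auto
  ultimately have "G r - 0 \<le> integral {0..r} f - 0"
    by (intro tendsto_le[OF _ tendsto_diff tendsto_diff]) auto
  then show ?thesis
    unfolding G_def f_def by simp
qed

lemma classP_energy_inequality_eventually:
  fixes q g g' :: "real \<Rightarrow> real"
  assumes "classP \<gamma> q"
    and g_deriv: "\<forall>x\<in>{0..<1}. (g has_real_derivative g' x) (at x within {0..<1})"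
    and g'_cont: "continuous_on {0..<1} g'" and "g 0 = 0"
    and "\<epsilon> > 0"
  shows "\<forall>\<^sub>F r in at_left 1.
           r * integral {0..r} (\<lambda>x. (g' x)\<^sup>2)
             \<ge> r * integral {0..r} (\<lambda>x. q x * (g x)\<^sup>2) + (\<gamma> - \<epsilon>) * (g r)\<^sup>2"
proof -
  have q_cont: "continuous_on {0..<1} q"
    using assms(1) unfolding classP_def by blast
  from assms(1) obtain y yd L where ivp: "ivp_solution q y yd"
    and y_pos: "\<forall>x\<in>{0<..<1}. y x > 0"
    and lim: "((\<lambda>x. ereal (yd x / y x)) \<longlongrightarrow> L) (at_left 1)" and "L \<ge> ereal \<gamma>"
    unfolding classP_def by blast
  have "ereal (\<gamma> - \<epsilon> / 2) < ereal \<gamma>"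
    using \<open>\<epsilon> > 0\<close> by simp
  then have "ereal (\<gamma> - \<epsilon> / 2) < L"
    using \<open>L \<ge> ereal \<gamma>\<close> by (rule order_less_le_trans)
  then have "\<forall>\<^sub>F r in at_left 1. ereal (\<gamma> - \<epsilon> / 2) < ereal (yd r / y r)"
    by (rule order_tendstoD(1)[OF lim])
  then have "\<forall>\<^sub>F r in at_left 1. \<gamma> - \<epsilon> / 2 < yd r / y r"
    by simp
  moreover have "((\<lambda>r. r * (\<gamma> - \<epsilon> / 2)) \<longlongrightarrow> 1 * (\<gamma> - \<epsilon> / 2)) (at_left 1)"
    by (intro tendsto_intros)
  then have "\<forall>\<^sub>F r in at_left 1. \<gamma> - \<epsilon> < r * (\<gamma> - \<epsilon> / 2)"
    by (rule order_tendstoD(1)) (use \<open>\<epsilon> > 0\<close> in simp)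
  moreover have "\<forall>\<^sub>F r in at_left 1. r \<in> {0<..<(1::real)}"
    by (rule eventually_at_left_real) simp
  ultimately show ?thesis
  proof eventually_elim
    case (elim r)
    then have r: "0 < r" "r < 1" by auto
    note ints = energy_terms_integrable[OF q_cont g_deriv g'_cont \<open>r < 1\<close>]
    have "r * (\<gamma> - \<epsilon> / 2) \<le> r * (yd r / y r)"
      using elim r by (intro mult_left_mono) auto
    then have "(\<gamma> - \<epsilon>) * (g r)\<^sup>2 \<le> r * (yd r / y r) * (g r)\<^sup>2"
      using elim by (intro mult_right_mono) auto
    also have "\<dots> = r * ((g r)\<^sup>2 * yd r / y r)"
      by simp
    also have "\<dots> \<le> r * integral {0..r} (\<lambda>x. (g' x)\<^sup>2 - q x * (g x)\<^sup>2)"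
      using picone_inequality[OF ivp y_pos q_cont g_deriv g'_cont \<open>g 0 = 0\<close> r] r
      by (intro mult_left_mono) auto
    also have "\<dots> = r * integral {0..r} (\<lambda>x. (g' x)\<^sup>2) - r * integral {0..r} (\<lambda>x. q x * (g x)\<^sup>2)"
      by (simp add: integral_diff[OF ints] right_diff_distrib)
    finally show ?case
      by simp
  qed
qed

lemma eventually_at_left_imp_delta:
  fixes a :: real
  assumes "eventually P (at_left a)"
  shows "\<exists>\<delta>>0. \<forall>r. a - \<delta> < r \<and> r < a \<longrightarrow> P r"
proof -
  obtain b where "b < a" "\<forall>r>b. r < a \<longrightarrow> P r"
    using assms unfolding eventually_at_left_field by blast
  then show ?thesis
    by (intro exI[of _ "a - b"]) auto
qed

theorem lemma3p2:
  fixes \<alpha> :: real and q g g' :: "real \<Rightarrow> real"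
  assumes "0 \<le> \<alpha>" "\<alpha> < 1"
    and "classP ((1 + \<alpha>) / 2) q"
    and "\<forall>x\<in>{0..<1}. (g has_real_derivative g' x) (at x within {0..<1})"
    and "continuous_on {0..<1} g'"
    and "g 0 = 0" "g' 0 \<noteq> 0"
  shows "\<forall>\<epsilon>>0. \<exists>\<delta>>0. \<forall>r. 1 - \<delta> < r \<and> r < 1 \<longrightarrow>
           r * integral {0..r} (\<lambda>x. (g' x)\<^sup>2)
             \<ge> r * integral {0..r} (\<lambda>x. q x * (g x)\<^sup>2) + ((1 + \<alpha>) / 2 - \<epsilon>) * (g r)\<^sup>2"
  using eventually_at_left_imp_delta[OF classP_energy_inequality_eventually[OF assms(3-6)]]
  by blast

end
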